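(* Suppose each firm $i$'s payoff is $$\pi_i(\boldsymbol{x})=\alpha_0+\alpha_1x_i-\frac{\alpha_2}{2}x_i^2+\beta_1\sum_{j\ne i}x_j-\beta_2\sum_{j\ne i}x_ix_j,$$ equilibria are interior (characterized by first-order conditions), and consider two-period sequential games $\boldsymbol{n}=(n_1,n_2)$ with $n_1\ge1$, $n_2\ge0$. Suppose the Stackelberg independence property is non-trivially satisfied for all $(n_1,n_2)$, i.e. the total equilibrium quantity of the period-1 firms is independent of $n_2$ for every $n_1$ and is not identically zero (with $\alpha_1\neq 0$ and $\alpha_2\ne\beta_2$). Then $\alpha_2=2\beta_2$ and $\beta_1=0$, so that (up to the irrelevant constant $\alpha_0$) $\pi_i(\boldsymbol{x})=x_i\,a(\overline{X}_c-X)$ with $a=\beta_2$, $\overline{X}_c=\alpha_1/\beta_2$, and $X=\sum_jx_j$.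
   Context: Two-period sequential game: the $n_1$ firms of period 1 choose quantities simultaneously; the $n_2$ firms of period 2 observe the period-1 total $X_1$ and then choose simultaneously; equilibrium is subgame perfect. Stackelberg independence here means the period-1 firms' equilibrium choices do not depend on $n_2$. *)

theory Defs
  imports Complex_Main
begin

text \<open>Firms are indexed by naturals; in the game (n1,n2) the period-1 firms are
  0..<n1 and the period-2 firms are n1..<n1+n2. A quantity profile is nat => real.\<close>

definition payoff :: "real \<Rightarrow> real \<Rightarrow> real \<Rightarrow> real \<Rightarrow> real \<Rightarrow> nat \<Rightarrow> (nat \<Rightarrow> real) \<Rightarrow> nat \<Rightarrow> real" where
  "payoff a0 a1 a2 b1 b2 N x i =
     a0 + a1 * x i - a2 / 2 * (x i)^2
     + b1 * (\<Sum>j\<in>{..<N} - {i}. x j)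
     - b2 * (\<Sum>j\<in>{..<N} - {i}. x i * x j)"

definition profile :: "nat \<Rightarrow> (nat \<Rightarrow> real) \<Rightarrow> (nat \<Rightarrow> real) \<Rightarrow> nat \<Rightarrow> real" where
  "profile n1 x1 y = (\<lambda>j. if j < n1 then x1 j else y j)"

definition stage2_eq :: "real \<Rightarrow> real \<Rightarrow> real \<Rightarrow> real \<Rightarrow> real \<Rightarrow> nat \<Rightarrow> nat \<Rightarrow> (nat \<Rightarrow> real) \<Rightarrow> bool" where
  "stage2_eq a0 a1 a2 b1 b2 n1 n2 x \<longleftrightarrow>
     (\<forall>k\<in>{n1..<n1+n2}.
        ((\<lambda>t. payoff a0 a1 a2 b1 b2 (n1+n2) (x(k:=t)) k) has_real_derivative 0) (at (x k)))"

text \<open>Subgame perfect equilibrium (interior, first-order conditions): sigma is the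
  period-2 strategy, mapping the observed period-1 total X1 to period-2 quantities;
  x1 gives the period-1 quantities.\<close>
definition spe :: "real \<Rightarrow> real \<Rightarrow> real \<Rightarrow> real \<Rightarrow> real \<Rightarrow> nat \<Rightarrow> nat \<Rightarrow> (real \<Rightarrow> nat \<Rightarrow> real) \<Rightarrow> (nat \<Rightarrow> real) \<Rightarrow> bool" where
  "spe a0 a1 a2 b1 b2 n1 n2 \<sigma> x1 \<longleftrightarrow>
     (\<forall>z. stage2_eq a0 a1 a2 b1 b2 n1 n2 (profile n1 z (\<sigma> (\<Sum>j<n1. z j)))) \<and>
     (\<forall>i<n1. ((\<lambda>t. payoff a0 a1 a2 b1 b2 (n1+n2)
                     (profile n1 (x1(i:=t)) (\<sigma> (\<Sum>j<n1. (x1(i:=t)) j))) i)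
               has_real_derivative 0) (at (x1 i)))"

end

theory Submission
  imports Defs
begin

text \<open>
  Summing the period-2 first-order conditions shows that the period-2 total reacts to the
  period-1 total \<open>X\<^sub>1\<close> affinely, with slope \<open>-n\<^sub>2 b\<^sub>2 / D\<close> where
  \<open>D = a\<^sub>2 - b\<^sub>2 + n\<^sub>2 b\<^sub>2\<close>. Substituting this reaction into the period-1 first-order conditions and
  summing them gives, with \<open>d = a\<^sub>2 - b\<^sub>2\<close>,
  \<open>n\<^sub>1 (a\<^sub>1 d - b\<^sub>1 b\<^sub>2 n\<^sub>2) = X\<^sub>1 (d\<^sup>2 + n\<^sub>1 b\<^sub>2 d + n\<^sub>2 b\<^sub>2 (d - b\<^sub>2))\<close>.
  Both sides are affine in \<open>n\<^sub>2\<close>, so independence of \<open>X\<^sub>1\<close> from \<open>n\<^sub>2\<close> forces the ratio of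
  the \<open>n\<^sub>2\<close>-coefficients to equal the ratio of the constant terms. This yields
  \<open>a\<^sub>1 (d - b\<^sub>2) + b\<^sub>1 (d + n\<^sub>1 b\<^sub>2) = 0\<close> for every \<open>n\<^sub>1\<close>, whence \<open>b\<^sub>1 = 0\<close> and \<open>d = b\<^sub>2\<close>.
\<close>

lemma sum_fun_upd_lessThan:
  fixes x :: "nat \<Rightarrow> 'a::ab_group_add"
  assumes "k < N"
  shows "(\<Sum>j<N. (x(k:=t)) j) = (\<Sum>j<N. x j) - x k + t"
proof -
  have k: "k \<in> {..<N}" using assms by simp
  have "(\<Sum>j<N. (x(k:=t)) j) = t + (\<Sum>j\<in>{..<N} - {k}. x j)"
    using sum.remove[OF finite_lessThan k, of "x(k:=t)"] by simp
  also have "\<dots> = (\<Sum>j<N. x j) - x k + t"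
    using sum.remove[OF finite_lessThan k, of x] by (simp add: algebra_simps)
  finally show ?thesis .
qed

lemma payoff_eq_total:
  assumes "i < N"
  shows "payoff a0 a1 a2 b1 b2 N p i =
           a0 + a1 * p i - a2 / 2 * (p i)^2 + (b1 - b2 * p i) * ((\<Sum>j<N. p j) - p i)"
proof -
  have rivals: "(\<Sum>j\<in>{..<N} - {i}. p j) = (\<Sum>j<N. p j) - p i"
    using assms by (simp add: sum_diff1)
  have cross: "(\<Sum>j\<in>{..<N} - {i}. p i * p j) = p i * ((\<Sum>j<N. p j) - p i)"
    by (simp add: sum_distrib_left[symmetric] rivals)
  show ?thesis
    unfolding payoff_def cross rivals by (simp add: algebra_simps)
qed

lemma payoff_fun_upd:
  assumes "k < N"
  shows "payoff a0 a1 a2 b1 b2 N (x(k:=t)) k =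
           a0 + a1 * t - a2 / 2 * t^2 + (b1 - b2 * t) * ((\<Sum>j<N. x j) - x k)"
  unfolding payoff_eq_total[OF assms] sum_fun_upd_lessThan[OF assms] by simp

lemma DERIV_payoff_affine_rivals:
  "((\<lambda>t. a0 + a1 * t - a2 / 2 * t^2 + (b1 - b2 * t) * (c0 + c1 * t)) has_real_derivative
      a1 - a2 * x - b2 * (c0 + c1 * x) + (b1 - b2 * x) * c1) (at x)"
  by (rule derivative_eq_intros refl | simp add: algebra_simps)+

lemma stage2_eq_foc:
  assumes "stage2_eq a0 a1 a2 b1 b2 n1 n2 p" and k: "k \<in> {n1..<n1+n2}"
  shows "a1 - (a2 - b2) * p k - b2 * (\<Sum>j<n1+n2. p j) = 0"
proof -
  have "((\<lambda>t. payoff a0 a1 a2 b1 b2 (n1+n2) (p(k:=t)) k) has_real_derivative 0) (at (p k))"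
    using assms unfolding stage2_eq_def by blast
  moreover have "((\<lambda>t. payoff a0 a1 a2 b1 b2 (n1+n2) (p(k:=t)) k) has_real_derivative
                   a1 - a2 * p k - b2 * ((\<Sum>j<n1+n2. p j) - p k)) (at (p k))"
    using DERIV_payoff_affine_rivals[of a0 a1 a2 b1 b2 "(\<Sum>j<n1+n2. p j) - p k" 0 "p k"] k
    by (simp add: payoff_fun_upd)
  ultimately show ?thesis
    by (auto dest: DERIV_unique simp: algebra_simps)
qed

lemma sum_profile:
  "(\<Sum>j<n1+n2. profile n1 z y j) = (\<Sum>j<n1. z j) + (\<Sum>j\<in>{n1..<n1+n2}. y j)"
proof -
  have "(\<Sum>j<n1+n2. profile n1 z y j) =
          (\<Sum>j<n1. profile n1 z y j) + (\<Sum>j\<in>{n1..<n1+n2}. profile n1 z y j)"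
    by (metis add.commute atLeast0LessThan le_add2 sum.atLeastLessThan_concat zero_le)
  also have "\<dots> = (\<Sum>j<n1. z j) + (\<Sum>j\<in>{n1..<n1+n2}. y j)"
    by (auto intro!: arg_cong2[where f = "(+)"] sum.cong simp: profile_def)
  finally show ?thesis .
qed

lemma stage2_eq_profile_total:
  assumes "stage2_eq a0 a1 a2 b1 b2 n1 n2 (profile n1 z y)"
  shows "(a2 - b2 + real n2 * b2) * (\<Sum>j\<in>{n1..<n1+n2}. y j) = real n2 * (a1 - b2 * (\<Sum>j<n1. z j))"
proof -
  define X1 where "X1 = (\<Sum>j<n1. z j)"
  define Y where "Y = (\<Sum>j\<in>{n1..<n1+n2}. y j)"
  have "a1 - (a2 - b2) * y k - b2 * (X1 + Y) = 0" if "k \<in> {n1..<n1+n2}" for k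
    using stage2_eq_foc[OF assms that] that unfolding sum_profile
    by (simp add: profile_def X1_def Y_def)
  then have "(\<Sum>k\<in>{n1..<n1+n2}. a1 - (a2 - b2) * y k - b2 * (X1 + Y)) = 0"
    by simp
  then have "real n2 * a1 - (a2 - b2) * Y - real n2 * b2 * (X1 + Y) = 0"
    by (simp add: sum_subtractf sum_distrib_left[symmetric] Y_def)
  then show ?thesis
    by (simp add: X1_def Y_def algebra_simps)
qed

lemma spe_stage2_denominator_nonzero:
  assumes "spe a0 a1 a2 b1 b2 n1 n2 \<sigma> x1" "a1 \<noteq> 0" "a2 \<noteq> b2"
  shows "a2 - b2 + real n2 * b2 \<noteq> 0"
proof
  assume D: "a2 - b2 + real n2 * b2 = 0"
  have "stage2_eq a0 a1 a2 b1 b2 n1 n2 (profile n1 (\<lambda>_. 0) (\<sigma> 0))"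
    using assms(1) unfolding spe_def by (metis sum.neutral_const)
  from stage2_eq_profile_total[OF this] D have "real n2 * a1 = 0"
    by simp
  with assms D show False
    by simp
qed

lemma spe_period1_foc:
  assumes spe: "spe a0 a1 a2 b1 b2 n1 n2 \<sigma> x1" and i: "i < n1"
    and a1: "a1 \<noteq> 0" and a2: "a2 \<noteq> b2"
  defines "D \<equiv> a2 - b2 + real n2 * b2" and "X1 \<equiv> \<Sum>j<n1. x1 j"
  shows "D * (a1 - (a2 - b2) * x1 i - b2 * X1) = real n2 * b2 * (a1 + b1 - b2 * X1 - b2 * x1 i)"
proof -
  have D: "D \<noteq> 0"
    using spe_stage2_denominator_nonzero[OF spe a1 a2] by (simp add: D_def)
  define R where "R = X1 - x1 i"
  define c0 where "c0 = R + real n2 * (a1 - b2 * R) / D"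
  define c1 where "c1 = - real n2 * b2 / D"
  have reduced: "payoff a0 a1 a2 b1 b2 (n1+n2) (profile n1 (x1(i:=t)) (\<sigma> (\<Sum>j<n1. (x1(i:=t)) j))) i
                 = a0 + a1 * t - a2 / 2 * t^2 + (b1 - b2 * t) * (c0 + c1 * t)" for t
  proof -
    define y where "y = \<sigma> (\<Sum>j<n1. (x1(i:=t)) j)"
    have X1t: "(\<Sum>j<n1. (x1(i:=t)) j) = R + t"
      unfolding sum_fun_upd_lessThan[OF i] R_def X1_def by simp
    have "stage2_eq a0 a1 a2 b1 b2 n1 n2 (profile n1 (x1(i:=t)) y)"
      using spe unfolding spe_def y_def by blast
    from stage2_eq_profile_total[OF this, unfolded X1t, folded D_def]
    have Y: "(\<Sum>j\<in>{n1..<n1+n2}. y j) = real n2 * (a1 - b2 * (R + t)) / D"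
      using D by (simp add: eq_divide_eq mult.commute)
    have "(\<Sum>j<n1+n2. profile n1 (x1(i:=t)) y j) - t = c0 + c1 * t"
      using D unfolding sum_profile X1t Y by (simp add: c0_def c1_def field_simps)
    then show ?thesis
      using i by (simp add: payoff_eq_total profile_def y_def)
  qed
  have "((\<lambda>t. payoff a0 a1 a2 b1 b2 (n1+n2) (profile n1 (x1(i:=t)) (\<sigma> (\<Sum>j<n1. (x1(i:=t)) j))) i)
          has_real_derivative 0) (at (x1 i))"
    using spe i unfolding spe_def by blast
  then have "((\<lambda>t. a0 + a1 * t - a2 / 2 * t^2 + (b1 - b2 * t) * (c0 + c1 * t)) has_real_derivative 0)
               (at (x1 i))"
    by (simp only: reduced)
  with DERIV_payoff_affine_rivals
  have foc: "a1 - a2 * x1 i - b2 * (c0 + c1 * x1 i) + (b1 - b2 * x1 i) * c1 = 0"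
    by (rule DERIV_unique)
  have rivals: "c0 + c1 * x1 i = X1 - x1 i + real n2 * (a1 - b2 * X1) / D"
    using D by (simp add: c0_def c1_def R_def field_simps)
  have "D * (a1 - a2 * x1 i - b2 * (c0 + c1 * x1 i) + (b1 - b2 * x1 i) * c1) =
          D * (a1 - a2 * x1 i - b2 * (X1 - x1 i))
          - real n2 * b2 * (a1 - b2 * X1) - real n2 * b2 * (b1 - b2 * x1 i)"
    unfolding rivals using D by (simp add: c1_def field_simps)
  with foc show ?thesis
    by (simp add: algebra_simps)
qed

lemma spe_period1_total:
  assumes spe: "spe a0 a1 a2 b1 b2 n1 n2 \<sigma> x1" and a1: "a1 \<noteq> 0" and a2: "a2 \<noteq> b2"
  defines "d \<equiv> a2 - b2"
  shows "real n1 * (a1 * d - b1 * b2 * real n2) =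
           (\<Sum>j<n1. x1 j) * (d^2 + real n1 * b2 * d + real n2 * b2 * (d - b2))"
proof -
  define D where "D = a2 - b2 + real n2 * b2"
  define X1 where "X1 = (\<Sum>j<n1. x1 j)"
  have "(\<Sum>i<n1. D * (a1 - d * x1 i - b2 * X1) - real n2 * b2 * (a1 + b1 - b2 * X1 - b2 * x1 i)) = 0"
    using spe_period1_foc[OF spe _ a1 a2] by (simp add: D_def X1_def d_def)
  then have "D * (real n1 * a1 - d * X1 - real n1 * b2 * X1)
               - real n2 * b2 * (real n1 * (a1 + b1) - real n1 * b2 * X1 - b2 * X1) = 0"
    by (simp add: sum_subtractf sum.distrib sum_distrib_left[symmetric] X1_def algebra_simps)
  then show ?thesis
    by (simp add: D_def d_def X1_def algebra_simps power2_eq_square)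
qed

lemma independence_constraint:
  fixes a1 b1 b2 d T :: real
  assumes total: "\<And>n2::nat. real n1 * (a1 * d - b1 * b2 * real n2) =
                     T * (d^2 + real n1 * b2 * d + real n2 * b2 * (d - b2))"
    and "a1 \<noteq> 0" "b2 \<noteq> 0" "d \<noteq> 0" "n1 \<ge> 1"
  shows "a1 * (d - b2) + b1 * (d + real n1 * b2) = 0"
proof -
  have "d * (T * (d + real n1 * b2)) = d * (real n1 * a1)"
    using total[of 0] by (simp add: power2_eq_square algebra_simps)
  then have T0: "T * (d + real n1 * b2) = real n1 * a1"
    using \<open>d \<noteq> 0\<close> by simp
  have "b2 * (T * (d - b2) + real n1 * b1) = 0"
    using total[of 1] total[of 0] by (simp add: algebra_simps)
  then have T1: "T * (d - b2) + real n1 * b1 = 0"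
    using \<open>b2 \<noteq> 0\<close> by simp
  have "T \<noteq> 0"
    using T0 assms by auto
  have "T * (a1 * (d - b2) + b1 * (d + real n1 * b2)) =
          a1 * (T * (d - b2) + real n1 * b1) + b1 * (T * (d + real n1 * b2) - real n1 * a1)"
    by (simp add: algebra_simps)
  also have "\<dots> = 0"
    by (simp add: T0 T1)
  finally show ?thesis
    using \<open>T \<noteq> 0\<close> by simp
qed

theorem proposition5:
  fixes a0 a1 a2 b1 b2 :: real
  assumes a1: "a1 \<noteq> 0" and a2: "a2 \<noteq> b2" and b2: "b2 \<noteq> 0"
    and exist: "\<forall>n1 n2. n1 \<ge> 1 \<longrightarrow> (\<exists>\<sigma> x1. spe a0 a1 a2 b1 b2 n1 n2 \<sigma> x1)"
    and indep: "\<exists>T :: nat \<Rightarrow> real.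
                  (\<forall>n1 n2 \<sigma> x1. n1 \<ge> 1 \<longrightarrow> spe a0 a1 a2 b1 b2 n1 n2 \<sigma> x1 \<longrightarrow>
                      (\<Sum>i<n1. x1 i) = T n1)
                  \<and> (\<exists>n1\<ge>1. T n1 \<noteq> 0)"
  shows "a2 = 2 * b2 \<and> b1 = 0 \<and>
         (\<forall>N x i. i < N \<longrightarrow>
            payoff a0 a1 a2 b1 b2 N x i = a0 + x i * (b2 * (a1 / b2 - (\<Sum>j<N. x j))))"
proof -
  obtain T where T: "\<And>n1 n2 \<sigma> x1. n1 \<ge> 1 \<Longrightarrow> spe a0 a1 a2 b1 b2 n1 n2 \<sigma> x1 \<Longrightarrow>
                       (\<Sum>i<n1. x1 i) = T n1"
    using indep by blast
  have constraint: "a1 * (a2 - 2 * b2) + b1 * (a2 - b2 + real n1 * b2) = 0" if "n1 \<ge> 1" for n1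
  proof -
    have "real n1 * (a1 * (a2 - b2) - b1 * b2 * real n2) =
            T n1 * ((a2 - b2)^2 + real n1 * b2 * (a2 - b2) + real n2 * b2 * (a2 - b2 - b2))" for n2
      using exist that spe_period1_total[OF _ a1 a2] T[OF that] by metis
    from independence_constraint[OF this a1 b2 _ that] a2 show ?thesis
      by simp
  qed
  have "b1 * b2 = (a1 * (a2 - 2 * b2) + b1 * (a2 - b2 + real 2 * b2))
                   - (a1 * (a2 - 2 * b2) + b1 * (a2 - b2 + real 1 * b2))"
    by (simp add: algebra_simps)
  also have "\<dots> = 0"
    using constraint[of 1] constraint[of 2] by simp
  finally have b1: "b1 = 0"
    using b2 by simp
  have a2_eq: "a2 = 2 * b2"
    using constraint[of 1] a1 by (simp add: b1)
  have "payoff a0 a1 a2 b1 b2 N x i = a0 + x i * (b2 * (a1 / b2 - (\<Sum>j<N. x j)))" if "i < N" for N x i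
    unfolding payoff_eq_total[OF that] b1 a2_eq using b2 by (simp add: algebra_simps power2_eq_square)
  with a2_eq b1 show ?thesis
    by blast
qed

end
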